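(* Let $m,n\in\mathbb{Z}^+$ be relatively prime and $j\in\{0,1,\dots,m-1\}$. If $(\beta_1,\beta_2)\in\mathbb{Z}^2$ is such that both $(\beta_1,\beta_2)$ and $(\beta_1,-\beta_2)$ belong to $\mathcal{G}_j$, then there exists a constant $C$ such that for all $l\in\{0,1,\dots,m-1\}$, $$\mathcal{K}_l\left(z_1^{\beta_1}\bar z_2^{\,\beta_2}\right)=\begin{cases}C\,z_1^{\beta_1}z_2^{-\beta_2}, & l=j,\\ 0, & l\ne j.\end{cases}$$
   Context: $\mathbb{H}_{m/n}=\{(z_1,z_2)\in\mathbb{C}^2:|z_1|^{m/n}<|z_2|<1\}$. Let $\mathcal{A}^2_{m/n}=\{(\alpha_1,\alpha_2)\in\mathbb{Z}^2:\alpha_1\ge0,\ n\alpha_1+m\alpha_2\ge -m-n+1\}$ (exactly the $\alpha$ with $z^\alpha=z_1^{\alpha_1}z_2^{\alpha_2}$ holomorphic and square integrable w.r.t. Lebesgue measure on $\mathbb{H}_{m/n}$). For $l\in\{0,\dots,m-1\}$ let $\mathcal{G}_l=\{\alpha\in\mathcal{A}^2_{m/n}:\alpha_1\equiv l\pmod m\}$, $\mathcal{S}_l$ the closed span of $\{z^\alpha:\alpha\in\mathcal{G}_l\}$ in $L^2(\mathbb{H}_{m/n})$, and $\mathcal{K}_l$ the orthogonal projection of $L^2(\mathbb{H}_{m/n})$ onto $\mathcal{S}_l$, i.e. $\mathcal{K}_lf(z)=\int K_l(z,w)f(w)\,dV(w)$ with $K_l(z,w)=\sum_{\alpha\in\mathcal{G}_l}z^\alpha\bar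 w^\alpha/\|z^\alpha\|^2_{L^2}$. *)

theory Defs
  imports "HOL-Analysis.Analysis"
begin

definition Hdom :: "nat \<Rightarrow> nat \<Rightarrow> (complex \<times> complex) set" where
  "Hdom m n = {(z1, z2). norm z1 powr (real m / real n) < norm z2 \<and> norm z2 < 1}"

definition A2 :: "nat \<Rightarrow> nat \<Rightarrow> (int \<times> int) set" where
  "A2 m n = {(a1, a2). a1 \<ge> 0 \<and> int n * a1 + int m * a2 \<ge> - int m - int n + 1}"

definition Gset :: "nat \<Rightarrow> nat \<Rightarrow> nat \<Rightarrow> (int \<times> int) set" where
  "Gset m n l = {a \<in> A2 m n. fst a mod int m = int l mod int m}"

definition mono :: "int \<times> int \<Rightarrow> complex \<times> complex \<Rightarrow> complex" where
  "mono a z = fst z powi fst a * snd z powi snd a"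

definition mono_norm2 :: "nat \<Rightarrow> nat \<Rightarrow> int \<times> int \<Rightarrow> real" where
  "mono_norm2 m n a = (LINT w:Hdom m n|lborel. (cmod (mono a w))\<^sup>2)"

definition Kker :: "nat \<Rightarrow> nat \<Rightarrow> nat \<Rightarrow> complex \<times> complex \<Rightarrow> complex \<times> complex \<Rightarrow> complex" where
  "Kker m n l z w = (\<Sum>\<^sub>\<infinity> a \<in> Gset m n l. mono a z * cnj (mono a w) / complex_of_real (mono_norm2 m n a))"

definition Kop :: "nat \<Rightarrow> nat \<Rightarrow> nat \<Rightarrow> (complex \<times> complex \<Rightarrow> complex) \<Rightarrow> complex \<times> complex \<Rightarrow> complex" where
  "Kop m n l f z = (LINT w:Hdom m n|lborel. Kker m n l z w * f w)"

end

theory Submission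
  imports Defs
begin

text \<open>
  Expanding the kernel, \<open>K\<^sub>l f(z)\<close> is the sum over \<open>a \<in> G\<^sub>l\<close> of \<open>z\<^sup>a \<langle>f, z\<^sup>a\<rangle> / \<parallel>z\<^sup>a\<parallel>\<^sup>2\<close>.
  Sum and integral may be exchanged because the series converges absolutely: polar coordinates
  in each variable give \<open>\<parallel>z\<^sup>a\<parallel>\<^sup>2 = \<pi>\<^sup>2 m / ((a\<^sub>1 + 1)(n a\<^sub>1 + m a\<^sub>2 + m + n))\<close>, and for fixed \<open>z\<close> in the
  domain the terms are dominated by those of a product of two series \<open>\<Sum> (k + 1) x\<^sup>k\<close> with \<open>x < 1\<close>.
  The domain and Lebesgue measure are invariant under \<open>(z\<^sub>1, z\<^sub>2) \<mapsto> (e\<^sup>i\<^sup>s z\<^sub>1, e\<^sup>i\<^sup>t z\<^sub>2)\<close>, which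
  multiplies the integrand of \<open>\<langle>z\<^sub>1\<^bsup>\<beta>1\<^esup> cnj(z\<^sub>2)\<^bsup>\<beta>2\<^esup>, z\<^sup>a\<rangle>\<close> by \<open>e\<^bsup>i(\<beta>1 - a1)s\<^esup> e\<^bsup>-i(a2 + \<beta>2)t\<^esup>\<close>;
  hence this inner product vanishes unless \<open>a = (\<beta>\<^sub>1, -\<beta>\<^sub>2)\<close>.  A single term survives, and it lies in
  \<open>G\<^sub>l\<close> exactly when \<open>l = j\<close>.
\<close>

lemma borel_measurable_power_int [measurable]:
  "(\<lambda>x::complex. x powi k) \<in> borel_measurable borel"
  by (cases "0 \<le> k") (simp_all add: power_int_def)

lemma borel_measurable_fst [measurable]:
  "(fst :: 'a::topological_space \<times> 'b::topological_space \<Rightarrow> 'a) \<in> borel_measurable borel"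
  by (intro borel_measurable_continuous_onI continuous_intros)

lemma borel_measurable_snd [measurable]:
  "(snd :: 'a::topological_space \<times> 'b::topological_space \<Rightarrow> 'b) \<in> borel_measurable borel"
  by (intro borel_measurable_continuous_onI continuous_intros)

lemma borel_measurable_cnj [measurable]: "cnj \<in> borel_measurable borel"
  by (intro borel_measurable_continuous_onI continuous_intros)

lemma borel_measurable_Complex [measurable]:
  "(\<lambda>(x, y). Complex x y) \<in> borel_measurable (borel \<Otimes>\<^sub>M borel)"
  unfolding Complex_eq case_prod_beta by measurable

lemma powr_less_iff_less_powr_inverse:
  fixes x y e :: real
  assumes "0 \<le> x" "0 \<le> y" "0 < e"
  shows "x powr e < y \<longleftrightarrow> x < y powr (1 / e)"
proof
  assume "x powr e < y"
  then have "(x powr e) powr (1 / e) < y powr (1 / e)"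
    using assms by (intro powr_less_mono2) auto
  then show "x < y powr (1 / e)"
    using assms by (simp add: powr_powr)
next
  assume "x < y powr (1 / e)"
  then have "x powr e < (y powr (1 / e)) powr e"
    using assms by (intro powr_less_mono2) auto
  then show "x powr e < y"
    using assms by (simp add: powr_powr)
qed

lemma cis_pi_div_power_int: "k \<noteq> 0 \<Longrightarrow> cis (pi / of_int k) powi k = -1"
  by (simp add: cis_power_int)

lemma summable_Suc_mult_power:
  fixes x :: real
  assumes "0 \<le> x" "x < 1"
  shows "summable (\<lambda>k. real (Suc k) * x ^ k)"
proof -
  have "summable (\<lambda>k. diffs (\<lambda>_. 1::real) k * x ^ k)"
    by (rule termdiff_converges[where K = 1]) (use assms in \<open>auto intro: summable_geometric\<close>)
  then show ?thesis
    by (simp add: diffs_def)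
qed

lemma nn_integral_count_space_finite_if_product_bound:
  fixes A B :: "nat \<Rightarrow> real" and \<phi> :: "'a \<Rightarrow> nat \<times> nat" and T :: "'a \<Rightarrow> real"
  assumes "summable A" "summable B" "\<And>k. 0 \<le> A k" "\<And>j. 0 \<le> B j" "inj_on \<phi> G"
    and le: "\<And>a. a \<in> G \<Longrightarrow> T a \<le> A (fst (\<phi> a)) * B (snd (\<phi> a))"
  shows "(\<integral>\<^sup>+a. ennreal (T a) \<partial>count_space G) < \<infinity>"
proof -
  define U where "U kj = ennreal (A (fst kj)) * ennreal (B (snd kj))" for kj
  interpret N: sigma_finite_measure "count_space (UNIV :: nat set)"
    by (rule sigma_finite_measure_count_space_countable) simp
  have "(\<integral>\<^sup>+a. ennreal (T a) \<partial>count_space G) \<le> (\<integral>\<^sup>+a. U (\<phi> a) \<partial>count_space G)"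
    using assms(3,4) by (intro nn_integral_mono) (auto simp: U_def le ennreal_mult[symmetric] intro!: ennreal_leI)
  also have "\<dots> = (\<integral>\<^sup>+kj. U kj * indicator (\<phi> ` G) kj \<partial>count_space UNIV)"
    using assms(5) by (simp add: nn_integral_bij_count_space[OF inj_on_imp_bij_betw] nn_integral_count_space_indicator)
  also have "\<dots> \<le> (\<integral>\<^sup>+kj. U kj \<partial>(count_space UNIV \<Otimes>\<^sub>M count_space UNIV))"
    by (auto simp: pair_measure_countable intro!: nn_integral_mono simp: indicator_def)
  also have "\<dots> = (\<integral>\<^sup>+k. \<integral>\<^sup>+j. U (k, j) \<partial>count_space UNIV \<partial>count_space UNIV)"
    by (rule N.nn_integral_fst[symmetric]) (simp add: pair_measure_countable)
  also have "\<dots> = (\<integral>\<^sup>+k. ennreal (A k) \<partial>count_space UNIV) * (\<integral>\<^sup>+j. ennreal (B j) \<partial>count_space UNIV)"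
    by (simp add: U_def nn_integral_cmult nn_integral_multc)
  also have "\<dots> = ennreal (suminf A) * ennreal (suminf B)"
    using assms(1-4) by (simp add: nn_integral_count_space_nat suminf_ennreal2)
  also have "\<dots> < \<infinity>"
    by (simp add: ennreal_mult_less_top)
  finally show ?thesis .
qed

lemma infsum_eq_integral_count_space:
  fixes f :: "'a \<Rightarrow> complex"
  shows "infsum f A = integral\<^sup>L (count_space A) f"
proof (cases "integrable (count_space A) f")
  case True
  then show ?thesis
    by (simp add: abs_summable_on_def infsetsum_infsum[symmetric] infsetsum_def)
next
  case False
  then have "\<not> f summable_on A"
    using abs_summable_equivalent summable_on_iff_abs_summable_on_complex
    by (auto simp: abs_summable_on_def)
  with False show ?thesis
    by (simp add: infsum_not_exists not_integrable_integral_eq)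
qed

lemma infsum_eq_single:
  assumes "\<And>a. a \<in> A \<Longrightarrow> a \<noteq> x \<Longrightarrow> f a = 0"
  shows "infsum f A = (if x \<in> A then f x else 0)"
proof -
  have "infsum f A = infsum f (A \<inter> {x})"
    using assms by (intro infsum_cong_neutral) auto
  then show ?thesis
    by (cases "x \<in> A") auto
qed

lemma nn_integral_unit_interval_powr:
  fixes e K :: real
  assumes "e > -1" "K \<ge> 0"
  shows "(\<integral>\<^sup>+r. ennreal (K * r powr e) * indicator {0<..<1} r \<partial>lborel) = ennreal (K / (e + 1))"
proof -
  have "(\<integral>\<^sup>+r. ennreal (K * r powr e) * indicator {0<..<1} r \<partial>lborel)
      = (\<integral>\<^sup>+r. ennreal (indicator {0..1} r * (K * r powr e)) \<partial>lborel)"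
    using AE_lborel_singleton[of 0] AE_lborel_singleton[of 1]
    by (intro nn_integral_cong_AE, eventually_elim) (auto simp: indicator_def)
  also have "\<dots> = ennreal (K * (1 powr (e + 1) / (e + 1)))"
    using assms
    by (intro nn_integral_has_integral_lebesgue has_integral_mult_right has_integral_powr_from_0) auto
  finally show ?thesis by simp
qed


section \<open>Rotation invariance of Lebesgue measure on \<open>\<complex>\<close>\<close>

lemma lborel_complex_eq_distr_Complex:
  "distr (lborel \<Otimes>\<^sub>M lborel) borel (\<lambda>(x, y). Complex x y) = (lborel :: complex measure)"
proof (rule lborel_eqI[symmetric])
  fix l u :: complex
  assume le: "\<And>b. b \<in> Basis \<Longrightarrow> l \<bullet> b \<le> u \<bullet> b"
  then have "Re l \<le> Re u" "Im l \<le> Im u"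
    using le[of 1] le[of \<i>] by (simp_all add: Basis_complex_def)
  moreover have "(\<lambda>(x, y). Complex x y) -` box l u \<inter> space (lborel \<Otimes>\<^sub>M lborel)
      = {Re l<..<Re u} \<times> {Im l<..<Im u}"
    by (auto simp: box_def Basis_complex_def space_pair_measure)
  ultimately show "emeasure (distr (lborel \<Otimes>\<^sub>M lborel) borel (\<lambda>(x, y). Complex x y)) (box l u)
      = (\<Prod>b\<in>Basis. (u - l) \<bullet> b)"
    by (subst emeasure_distr)
       (auto simp: lborel.emeasure_pair_measure_Times Basis_complex_def ennreal_mult
             simp del: space_lborel)
qed simp

lemma nn_integral_lborel_complex:
  assumes [measurable]: "g \<in> borel_measurable (borel :: complex measure)"
  shows "(\<integral>\<^sup>+w. g w \<partial>lborel) = (\<integral>\<^sup>+y. \<integral>\<^sup>+x. g (Complex x y) \<partial>lborel \<partial>lborel)"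
proof -
  have "(\<integral>\<^sup>+w. g w \<partial>lborel) = (\<integral>\<^sup>+p. g (case p of (x, y) \<Rightarrow> Complex x y) \<partial>(lborel \<Otimes>\<^sub>M lborel))"
    by (subst lborel_complex_eq_distr_Complex[symmetric], subst nn_integral_distr)
       (auto simp: borel_prod)
  also have "\<dots> = (\<integral>\<^sup>+y. \<integral>\<^sup>+x. g (Complex x y) \<partial>lborel \<partial>lborel)"
    by (subst lborel_pair.nn_integral_snd[symmetric]) (auto simp: borel_prod)
  finally show ?thesis .
qed

lemma nn_integral_lborel_shear_Re:
  assumes [measurable]: "g \<in> borel_measurable (borel :: complex measure)"
  shows "(\<integral>\<^sup>+w. g (Complex (Re w + t * Im w) (Im w)) \<partial>lborel) = (\<integral>\<^sup>+w. g w \<partial>lborel)"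
proof -
  have "(\<integral>\<^sup>+x. g (Complex (x + t * y) y) \<partial>lborel) = (\<integral>\<^sup>+x. g (Complex x y) \<partial>lborel)" for y
    by (subst nn_integral_real_affine[of _ 1 "t * y"]) (simp_all add: add.commute)
  then show ?thesis
    by (simp add: nn_integral_lborel_complex)
qed

lemma nn_integral_lborel_shear_Im:
  assumes [measurable]: "g \<in> borel_measurable (borel :: complex measure)"
  shows "(\<integral>\<^sup>+w. g (Complex (Re w) (Im w + s * Re w)) \<partial>lborel) = (\<integral>\<^sup>+w. g w \<partial>lborel)"
proof -
  have "(\<integral>\<^sup>+y. g (Complex x (y + s * x)) \<partial>lborel) = (\<integral>\<^sup>+y. g (Complex x y) \<partial>lborel)" for x
    by (subst nn_integral_real_affine[of _ 1 "s * x"]) (simp_all add: add.commute)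
  then have "(\<integral>\<^sup>+x. \<integral>\<^sup>+y. g (Complex x (y + s * x)) \<partial>lborel \<partial>lborel)
      = (\<integral>\<^sup>+x. \<integral>\<^sup>+y. g (Complex x y) \<partial>lborel \<partial>lborel)"
    by simp
  then show ?thesis
    by (simp add: nn_integral_lborel_complex lborel_pair.Fubini'[of "\<lambda>x y. g (Complex x (y + s * x))"]
                  lborel_pair.Fubini'[of "\<lambda>x y. g (Complex x y)"])
qed

text \<open>Paeth's factorisation of a rotation into three shears; each shear preserves Lebesgue
  measure by Fubini's theorem and translation invariance on the real line.\<close>

lemma unimodular_mult_eq_shears:
  fixes x y :: real
  assumes "cmod c = 1" "c \<noteq> -1"
  defines "t \<equiv> Im c / (1 + Re c)"
  shows "c * Complex x y
    = Complex ((x - t * y) - t * (y + Im c * (x - t * y))) (y + Im c * (x - t * y))"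
proof -
  have circle: "(Re c)\<^sup>2 + (Im c)\<^sup>2 = 1"
    using assms(1) by (simp add: cmod_def)
  have "1 + Re c \<noteq> 0"
  proof
    assume "1 + Re c = 0"
    then have "Re c = -1" by simp
    with circle have "c = -1" by (simp add: complex_eq_iff)
    with assms(2) show False ..
  qed
  then have t_Im: "t * (1 + Re c) = Im c" and t_Re: "t * Im c = 1 - Re c"
    using circle by (simp_all add: t_def field_simps power2_eq_square)
  have "x - t * y - t * (y + Im c * (x - t * y)) = x * (1 - t * Im c) - y * t * (2 - t * Im c)"
    by (simp add: algebra_simps)
  also have "\<dots> = Re c * x - y * (t * (1 + Re c))"
    by (simp add: t_Re algebra_simps)
  finally have Re_eq: "x - t * y - t * (y + Im c * (x - t * y)) = Re c * x - Im c * y"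
    by (simp add: t_Im)
  have "y + Im c * (x - t * y) = Im c * x + y * (1 - t * Im c)"
    by (simp add: algebra_simps)
  then have Im_eq: "y + Im c * (x - t * y) = Im c * x + Re c * y"
    by (simp add: t_Re)
  show ?thesis
    by (subst Re_eq, subst Im_eq) (simp add: complex_eq_iff)
qed

lemma nn_integral_lborel_mult_unimodular:
  assumes c: "cmod c = 1" and [measurable]: "g \<in> borel_measurable (borel :: complex measure)"
  shows "(\<integral>\<^sup>+w. g (c * w) \<partial>lborel) = (\<integral>\<^sup>+w. g w \<partial>lborel)"
proof -
  have shears: "(\<integral>\<^sup>+w. g (c * w) \<partial>lborel) = (\<integral>\<^sup>+w. g w \<partial>lborel)"
    if [measurable]: "g \<in> borel_measurable borel" and c: "cmod c = 1" "c \<noteq> -1" for g c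
  proof -
    define t where "t = Im c / (1 + Re c)"
    define shRe where "shRe h w = h (Complex (Re w + (- t) * Im w) (Im w))" for h :: "complex \<Rightarrow> ennreal" and w
    define shIm where "shIm h w = h (Complex (Re w) (Im w + Im c * Re w))" for h :: "complex \<Rightarrow> ennreal" and w
    have [measurable]: "shRe h \<in> borel_measurable borel" "shIm h \<in> borel_measurable borel"
      if [measurable]: "h \<in> borel_measurable borel" for h
      unfolding shRe_def shIm_def by measurable
    have "g (c * w) = shRe (shIm (shRe g)) w" for w
      using unimodular_mult_eq_shears[OF c, of "Re w" "Im w"]
      by (simp add: shRe_def shIm_def t_def)
    then have "(\<integral>\<^sup>+w. g (c * w) \<partial>lborel) = (\<integral>\<^sup>+w. shRe (shIm (shRe g)) w \<partial>lborel)"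
      by simp
    also have "\<dots> = (\<integral>\<^sup>+w. shIm (shRe g) w \<partial>lborel)"
      unfolding shRe_def[of "shIm (shRe g)"] by (rule nn_integral_lborel_shear_Re) measurable
    also have "\<dots> = (\<integral>\<^sup>+w. shRe g w \<partial>lborel)"
      unfolding shIm_def[of "shRe g"] by (rule nn_integral_lborel_shear_Im) measurable
    also have "\<dots> = (\<integral>\<^sup>+w. g w \<partial>lborel)"
      unfolding shRe_def by (rule nn_integral_lborel_shear_Re) measurable
    finally show ?thesis .
  qed
  \<comment> \<open>The shears exclude \<open>c = -1\<close>; a square root of \<open>c\<close> has nonnegative real part.\<close>
  have "csqrt c \<noteq> -1"
  proof
    assume "csqrt c = -1"
    then have "0 \<le> Re (-1 :: complex)"
      using Re_csqrt[of c] by (simp only:)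
    then show False by simp
  qed
  moreover have "cmod (csqrt c) = 1"
    using c by simp
  moreover have "g (c * w) = g (csqrt c * (csqrt c * w))" for w
    by (simp flip: power2_eq_square add: mult.assoc[symmetric])
  ultimately show ?thesis
    using shears[of g "csqrt c"] shears[of "\<lambda>w. g (csqrt c * w)" "csqrt c"] by (simp only:) simp
qed

lemma lborel_distr_mult_unimodular:
  assumes "cmod c = 1"
  shows "distr lborel borel ((*) c) = (lborel :: complex measure)"
proof (rule measure_eqI)
  fix A assume "A \<in> sets (distr lborel borel ((*) c))"
  then have [measurable]: "A \<in> sets borel" by simp
  have "emeasure (distr lborel borel ((*) c)) A = emeasure lborel ((*) c -` A)"
    by (subst emeasure_distr) auto
  also have "\<dots> = (\<integral>\<^sup>+w. indicator A (c * w) \<partial>lborel)"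
  proof (subst nn_integral_indicator[symmetric])
    show "(*) c -` A \<in> sets lborel"
      using measurable_sets_borel[of "(*) c" borel A]
      by (simp add: borel_measurable_continuous_onI continuous_on_mult_left)
  qed (auto intro!: nn_integral_cong simp: indicator_def)
  also have "\<dots> = emeasure lborel A"
    using assms by (subst nn_integral_lborel_mult_unimodular) auto
  finally show "emeasure (distr lborel borel ((*) c)) A = emeasure lborel A" .
qed simp

lemma lborel_distr_mult_unimodular_pair:
  assumes "cmod c1 = 1" "cmod c2 = 1"
  shows "distr lborel borel (\<lambda>(x, y). (c1 * x, c2 * y)) = (lborel :: (complex \<times> complex) measure)"
proof -
  have "distr lborel borel (\<lambda>(x, y). (c1 * x, c2 * y))
      = distr (lborel \<Otimes>\<^sub>M lborel) (borel \<Otimes>\<^sub>M borel) (\<lambda>(x::complex, y::complex). (c1 * x, c2 * y))"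
    by (simp add: lborel_prod borel_prod)
  also have "\<dots> = distr lborel borel ((*) c1) \<Otimes>\<^sub>M distr lborel borel ((*) c2)"
    using assms by (subst pair_measure_distr)
      (auto simp: lborel_distr_mult_unimodular intro: lborel.sigma_finite_measure_axioms)
  also have "\<dots> = lborel"
    using assms by (simp add: lborel_distr_mult_unimodular lborel_prod)
  finally show ?thesis .
qed

lemma integral_lborel_mult_unimodular_pair:
  fixes h :: "complex \<times> complex \<Rightarrow> 'b::{banach, second_countable_topology}"
  assumes "cmod c1 = 1" "cmod c2 = 1" and [measurable]: "h \<in> borel_measurable borel"
  shows "(\<integral>w. h (c1 * fst w, c2 * snd w) \<partial>lborel) = (\<integral>w. h w \<partial>lborel)"
proof -
  have "(\<integral>w. h w \<partial>lborel) = (\<integral>w. h w \<partial>distr lborel borel (\<lambda>(x, y). (c1 * x, c2 * y)))"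
    by (simp add: lborel_distr_mult_unimodular_pair assms)
  also have "\<dots> = (\<integral>w. h (c1 * fst w, c2 * snd w) \<partial>lborel)"
    by (subst integral_distr) (auto simp: case_prod_beta')
  finally show ?thesis ..
qed

lemma integral_lborel_eq_0_if_rotation_factor:
  fixes h :: "complex \<times> complex \<Rightarrow> complex"
  assumes "cmod c1 = 1" "cmod c2 = 1" "h \<in> borel_measurable borel"
    and factor: "\<And>w. h (c1 * fst w, c2 * snd w) = u * h w" and "u \<noteq> 1"
  shows "(\<integral>w. h w \<partial>lborel) = 0"
proof -
  have "(\<integral>w. h w \<partial>lborel) = u * (\<integral>w. h w \<partial>lborel)"
    using integral_lborel_mult_unimodular_pair[OF assms(1-3)] by (simp add: factor)
  then have "(1 - u) * (\<integral>w. h w \<partial>lborel) = 0"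
    by (simp add: algebra_simps)
  with \<open>u \<noteq> 1\<close> show ?thesis by simp
qed


section \<open>Radial integrals on \<open>\<complex>\<close>\<close>

lemma emeasure_lborel_complex_norm_atMost:
  "emeasure lborel {w::complex. cmod w \<le> r} = ennreal (pi * (max r 0)\<^sup>2)"
proof (cases "r < 0")
  case True
  then have "{w::complex. cmod w \<le> r} = {}"
    by (auto dest: order.trans[OF norm_ge_zero])
  with True show ?thesis by simp
next
  case False
  then have "{w::complex. cmod w \<le> r} = cball 0 r"
    by (auto simp: cball_def dist_norm)
  with False show ?thesis
    using emeasure_cball[of r "0::complex"] by (simp add: unit_ball_vol_2 max_def)
qed

lemma emeasure_density_disc_atMost:
  "emeasure (density lborel (\<lambda>r::real. ennreal (2 * pi * r))) {..b} = ennreal (pi * (max b 0)\<^sup>2)"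
proof -
  have "emeasure (density lborel (\<lambda>r::real. ennreal (2 * pi * r))) {..b}
      = (\<integral>\<^sup>+r. ennreal (2 * pi * r) * indicator {0..max b 0} r \<partial>lborel)"
  proof (subst emeasure_density, simp, simp, intro nn_integral_cong)
    fix r :: real
    show "ennreal (2 * pi * r) * indicator {..b} r = ennreal (2 * pi * r) * indicator {0..max b 0} r"
      by (cases "r \<le> 0") (auto simp: indicator_def ennreal_neg mult_nonneg_nonpos)
  qed
  also have "\<dots> = ennreal (pi * (max b 0)\<^sup>2 - pi * 0\<^sup>2)"
    by (rule nn_integral_FTC_Icc) (auto intro!: derivative_eq_intros)
  finally show ?thesis by simp
qed

lemma distr_norm_lborel_complex:
  "distr lborel borel (cmod :: complex \<Rightarrow> real) = density lborel (\<lambda>r. ennreal (2 * pi * r))"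
proof (rule measure_eqI_generator_eq_countable[where E = "range atMost" and \<Omega> = UNIV
      and A = "range (\<lambda>n::nat. {..real n})"])
  have atMost: "emeasure (distr lborel borel (cmod :: complex \<Rightarrow> real)) {..b} = ennreal (pi * (max b 0)\<^sup>2)"
    for b
    by (subst emeasure_distr) (auto simp: vimage_def emeasure_lborel_complex_norm_atMost)
  then show "emeasure (distr lborel borel (cmod :: complex \<Rightarrow> real)) X
      = emeasure (density lborel (\<lambda>r. ennreal (2 * pi * r))) X" if "X \<in> range atMost" for X
    using that by (auto simp: emeasure_density_disc_atMost)
  show "emeasure (distr lborel borel (cmod :: complex \<Rightarrow> real)) X \<noteq> \<infinity>"
    if "X \<in> range (\<lambda>n::nat. {..real n})" for X
    using that by (auto simp: atMost)
  show "\<Union> (range (\<lambda>n::nat. {..real n})) = UNIV"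
    by (auto intro: real_arch_simple)
qed (auto simp: Int_stable_def borel_eq_atMost)

lemma nn_integral_lborel_complex_radial:
  assumes [measurable]: "\<phi> \<in> borel_measurable borel"
  shows "(\<integral>\<^sup>+w. \<phi> (cmod w) \<partial>(lborel :: complex measure)) = (\<integral>\<^sup>+r. ennreal (2 * pi * r) * \<phi> r \<partial>lborel)"
proof -
  have "(\<integral>\<^sup>+w. \<phi> (cmod w) \<partial>(lborel :: complex measure)) = (\<integral>\<^sup>+r. \<phi> r \<partial>distr lborel borel cmod)"
    by (subst nn_integral_distr) auto
  then show ?thesis
    by (simp add: distr_norm_lborel_complex nn_integral_density)
qed

lemma nn_integral_disc_power:
  fixes T C :: real
  assumes "0 \<le> T" "0 \<le> C"
  shows "(\<integral>\<^sup>+r. ennreal (2 * pi * r) * ennreal (indicator {..<T} r * (r ^ p * C)) \<partial>lborel)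
    = ennreal (2 * pi * C * T ^ (p + 2) / (p + 2))"
proof -
  have "(\<integral>\<^sup>+r. ennreal (2 * pi * r) * ennreal (indicator {..<T} r * (r ^ p * C)) \<partial>lborel)
      = (\<integral>\<^sup>+r. ennreal (2 * pi * C * r ^ (p + 1)) * indicator {0..T} r \<partial>lborel)"
  proof (rule nn_integral_cong_AE)
    show "AE r in lborel. ennreal (2 * pi * r) * ennreal (indicator {..<T} r * (r ^ p * C))
        = ennreal (2 * pi * C * r ^ (p + 1)) * indicator {0..T} r"
      using AE_lborel_singleton[of T]
    proof eventually_elim
      case (elim r)
      then show ?case
        using assms
        by (cases "r < 0")
           (auto simp: indicator_def ennreal_neg mult_nonneg_nonpos ennreal_mult[symmetric] mult_ac)
    qed
  qed
  also have "\<dots> = ennreal (2 * pi * C * T ^ (p + 2) / (p + 2) - 2 * pi * C * 0 ^ (p + 2) / (p + 2))"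
  proof (rule nn_integral_FTC_Icc)
    fix x :: real
    have "DERIV (\<lambda>x. 2 * pi * C * x ^ (p + 2) / (p + 2)) x
        :> 2 * pi * C * (real (p + 2) * x ^ (p + 2 - Suc 0)) / (p + 2)"
      by (intro DERIV_cdivide DERIV_cmult DERIV_pow)
    moreover have "2 * pi * C * (real (p + 2) * x ^ (p + 2 - Suc 0)) / (p + 2) = 2 * pi * C * x ^ (p + 1)"
      by (simp add: field_simps)
    ultimately show "DERIV (\<lambda>x. 2 * pi * C * x ^ (p + 2) / (p + 2)) x :> 2 * pi * C * x ^ (p + 1)"
      by (simp only:)
  qed (use assms in auto)
  finally show ?thesis by simp
qed


section \<open>Monomials on the domain\<close>

lemma sets_Hdom [measurable]: "Hdom m n \<in> sets borel"
  unfolding Hdom_def by measurable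

lemma borel_measurable_mono [measurable]: "mono a \<in> borel_measurable borel"
  unfolding mono_def by measurable

lemma mem_Hdom_iff:
  assumes "m > 0" "n > 0"
  shows "w \<in> Hdom m n \<longleftrightarrow> cmod (fst w) < cmod (snd w) powr (real n / real m) \<and> cmod (snd w) < 1"
  using powr_less_iff_less_powr_inverse[of "cmod (fst w)" "cmod (snd w)" "real m / real n"] assms
  by (cases w) (simp add: Hdom_def)

lemma Hdom_mult_unimodular:
  "cmod c1 = 1 \<Longrightarrow> cmod c2 = 1 \<Longrightarrow> (c1 * fst w, c2 * snd w) \<in> Hdom m n \<longleftrightarrow> w \<in> Hdom m n"
  by (cases w) (simp add: Hdom_def norm_mult)

text \<open>\<open>wdeg m n a\<close> is half the degree of \<open>|z\<^sup>a|\<^sup>2 dV\<close> under the dilations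
  \<open>(z\<^sub>1, z\<^sub>2) \<mapsto> (t\<^sup>n z\<^sub>1, t\<^sup>m z\<^sub>2)\<close>, which preserve the inequality \<open>|z\<^sub>1|\<^bsup>m/n\<^esup> < |z\<^sub>2|\<close> defining the domain.\<close>

definition wdeg :: "nat \<Rightarrow> nat \<Rightarrow> int \<times> int \<Rightarrow> int" where
  "wdeg m n a = int n * fst a + int m * snd a + int m + int n"

lemma mem_A2_iff: "a \<in> A2 m n \<longleftrightarrow> 0 \<le> fst a \<and> 1 \<le> wdeg m n a"
  by (cases a) (auto simp: A2_def wdeg_def)

lemma norm_mono:
  assumes "snd w \<noteq> 0" "0 \<le> fst a"
  shows "cmod (mono a w) = cmod (fst w) ^ nat (fst a) * cmod (snd w) powr of_int (snd a)"
proof -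
  have "fst w powi fst a = fst w ^ nat (fst a)"
    using assms(2) by (simp add: power_int_def)
  then show ?thesis
    using assms(1) by (simp add: mono_def norm_mult norm_power norm_power_int powr_real_of_int')
qed

lemma nn_integral_Hdom_fibre:
  fixes p :: nat and q :: real
  assumes "m > 0" "n > 0"
  shows "(\<integral>\<^sup>+w1. ennreal (indicator (Hdom m n) (w1, w2) * (cmod w1 ^ p * cmod w2 powr q)) \<partial>lborel)
    = ennreal (2 * pi * (indicator {..<1} (cmod w2) * cmod w2 powr q)
        * (cmod w2 powr (real n / real m)) ^ (p + 2) / (p + 2))"
proof -
  define C where "C = indicator {..<1} (cmod w2) * cmod w2 powr q"
  have "(\<integral>\<^sup>+w1. ennreal (indicator (Hdom m n) (w1, w2) * (cmod w1 ^ p * cmod w2 powr q)) \<partial>lborel)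
      = (\<integral>\<^sup>+w1. ennreal (indicator {..<cmod w2 powr (real n / real m)} (cmod w1) * (cmod w1 ^ p * C)) \<partial>lborel)"
    using assms by (intro nn_integral_cong) (simp add: C_def indicator_def mem_Hdom_iff)
  also have "\<dots> = (\<integral>\<^sup>+r. ennreal (2 * pi * r)
      * ennreal (indicator {..<cmod w2 powr (real n / real m)} r * (r ^ p * C)) \<partial>lborel)"
    by (rule nn_integral_lborel_complex_radial) measurable
  also have "\<dots> = ennreal (2 * pi * C * (cmod w2 powr (real n / real m)) ^ (p + 2) / (p + 2))"
    by (rule nn_integral_disc_power) (auto simp: C_def)
  finally show ?thesis
    by (simp add: C_def)
qed

lemma nn_integral_Hdom_moment:
  fixes p :: nat and q :: real
  assumes "m > 0" "n > 0" and pos: "q + 2 + real n / real m * (p + 2) > 0"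
  shows "(\<integral>\<^sup>+w. ennreal (indicator (Hdom m n) w * (cmod (fst w) ^ p * cmod (snd w) powr q)) \<partial>lborel)
    = ennreal (4 * pi\<^sup>2 / ((p + 2) * (q + 2 + real n / real m * (p + 2))))"
proof -
  define \<Psi> where "\<Psi> s = ennreal (2 * pi * (indicator {..<1} s * s powr q)
    * (s powr (real n / real m)) ^ (p + 2) / (p + 2))" for s :: real
  have [measurable]: "\<Psi> \<in> borel_measurable borel"
    unfolding \<Psi>_def by measurable
  have "(\<integral>\<^sup>+w. ennreal (indicator (Hdom m n) w * (cmod (fst w) ^ p * cmod (snd w) powr q)) \<partial>lborel)
      = (\<integral>\<^sup>+w2. \<integral>\<^sup>+w1. ennreal (indicator (Hdom m n) (w1, w2) * (cmod w1 ^ p * cmod w2 powr q))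
          \<partial>lborel \<partial>lborel)"
    by (subst lborel_prod[symmetric], subst lborel_pair.nn_integral_snd[symmetric])
       (simp_all add: lborel_prod)
  also have "\<dots> = (\<integral>\<^sup>+w2. \<Psi> (cmod w2) \<partial>lborel)"
    using assms(1,2) by (simp only: nn_integral_Hdom_fibre \<Psi>_def)
  also have "\<dots> = (\<integral>\<^sup>+s. ennreal (2 * pi * s) * \<Psi> s \<partial>lborel)"
    by (rule nn_integral_lborel_complex_radial) measurable
  also have "\<dots> = (\<integral>\<^sup>+s. ennreal (4 * pi\<^sup>2 / (p + 2) * s powr (q + 1 + real n / real m * (p + 2)))
      * indicator {0<..<1} s \<partial>lborel)"
  proof (intro nn_integral_cong)
    fix s :: real
    show "ennreal (2 * pi * s) * \<Psi> s
      = ennreal (4 * pi\<^sup>2 / (p + 2) * s powr (q + 1 + real n / real m * (p + 2))) * indicator {0<..<1} s"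
    proof (cases "0 < s \<and> s < 1")
      case True
      then have power_eq: "(s powr (real n / real m)) ^ (p + 2) = s powr (real n / real m * (p + 2))"
        using powr_power[of s "real n / real m" "p + 2"] by (simp add: mult.commute)
      have powr_split: "s powr (q + 1 + real n / real m * (p + 2))
          = s powr q * s powr 1 * s powr (real n / real m * (p + 2))"
        by (simp only: powr_add)
      have "s powr (q + 1 + real n / real m * (p + 2)) = s powr q * s * (s powr (real n / real m)) ^ (p + 2)"
        using True by (simp only: power_eq powr_split) simp
      with True show ?thesis
        by (simp add: \<Psi>_def ennreal_mult[symmetric] power2_eq_square field_simps)
    qed (auto simp: \<Psi>_def indicator_def ennreal_neg mult_nonneg_nonpos)
  qed
  also have "\<dots> = ennreal (4 * pi\<^sup>2 / ((p + 2) * (q + 2 + real n / real m * (p + 2))))"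
    using pos by (subst nn_integral_unit_interval_powr) (auto simp: field_simps)
  finally show ?thesis .
qed

lemma nn_integral_Hdom_norm_mono_mult:
  assumes "m > 0" "n > 0" "a \<in> A2 m n" "b \<in> A2 m n"
  shows "(\<integral>\<^sup>+w. ennreal (indicator (Hdom m n) w * (cmod (mono a w) * cmod (mono b w))) \<partial>lborel)
    = ennreal (4 * pi\<^sup>2 * m / of_int ((fst a + fst b + 2) * (wdeg m n a + wdeg m n b)))"
proof -
  define p where "p = nat (fst a + fst b)"
  define q where "q = real_of_int (snd a + snd b)"
  have a: "0 \<le> fst a" "1 \<le> wdeg m n a" and b: "0 \<le> fst b" "1 \<le> wdeg m n b"
    using assms(3,4) by (simp_all add: mem_A2_iff)
  have p: "real p = fst a + fst b"
    using a b by (simp add: p_def)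
  have pos: "q + 2 + real n / real m * (p + 2) = (wdeg m n a + wdeg m n b) / m"
    using \<open>m > 0\<close> by (simp add: p q_def wdeg_def field_simps)
  have "indicator (Hdom m n) w * (cmod (mono a w) * cmod (mono b w))
      = indicator (Hdom m n) w * (cmod (fst w) ^ p * cmod (snd w) powr q)" for w
  proof (cases "w \<in> Hdom m n")
    case True
    then have "snd w \<noteq> 0"
      using assms(1,2) by (auto simp: mem_Hdom_iff)
    with a b show ?thesis
      by (simp add: norm_mono p_def q_def nat_add_distrib power_add powr_add)
  qed simp
  then have "(\<integral>\<^sup>+w. ennreal (indicator (Hdom m n) w * (cmod (mono a w) * cmod (mono b w))) \<partial>lborel)
      = (\<integral>\<^sup>+w. ennreal (indicator (Hdom m n) w * (cmod (fst w) ^ p * cmod (snd w) powr q)) \<partial>lborel)"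
    by (simp only:)
  also have "\<dots> = ennreal (4 * pi\<^sup>2 / ((p + 2) * (q + 2 + real n / real m * (p + 2))))"
  proof (rule nn_integral_Hdom_moment[OF assms(1,2)])
    show "q + 2 + real n / real m * (p + 2) > 0"
      unfolding pos using a b \<open>m > 0\<close> by simp
  qed
  also have "(p + 2) * (q + 2 + real n / real m * (p + 2))
      = of_int ((fst a + fst b + 2) * (wdeg m n a + wdeg m n b)) / m"
    by (simp only: pos) (simp add: p)
  also have "4 * pi\<^sup>2 / (of_int ((fst a + fst b + 2) * (wdeg m n a + wdeg m n b)) / m)
      = 4 * pi\<^sup>2 * m / of_int ((fst a + fst b + 2) * (wdeg m n a + wdeg m n b))"
    by simp
  finally show ?thesis .
qed

lemma nn_integral_Hdom_norm_mono_mult_le: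
  assumes "m > 0" "n > 0" "a \<in> A2 m n" "b \<in> A2 m n"
  shows "(\<integral>\<^sup>+w. ennreal (indicator (Hdom m n) w * (cmod (mono a w) * cmod (mono b w))) \<partial>lborel)
    \<le> ennreal (pi\<^sup>2 * m)"
proof -
  have "4 \<le> (fst a + fst b + 2) * (wdeg m n a + wdeg m n b)"
    using assms(3,4) mult_mono[of 2 "fst a + fst b + 2" 2 "wdeg m n a + wdeg m n b"]
    by (simp add: mem_A2_iff)
  then have "real_of_int 4 \<le> of_int ((fst a + fst b + 2) * (wdeg m n a + wdeg m n b))"
    by (simp only: of_int_le_iff)
  then have "4 * pi\<^sup>2 * m / of_int ((fst a + fst b + 2) * (wdeg m n a + wdeg m n b)) \<le> 4 * pi\<^sup>2 * m / 4"
    by (intro divide_left_mono) auto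
  then show ?thesis
    by (simp add: nn_integral_Hdom_norm_mono_mult[OF assms] ennreal_leI)
qed

lemma mono_norm2_eq:
  assumes "m > 0" "n > 0" "a \<in> A2 m n"
  shows "mono_norm2 m n a = pi\<^sup>2 * m / of_int ((fst a + 1) * wdeg m n a)"
proof -
  have "mono_norm2 m n a
      = enn2real (\<integral>\<^sup>+w. ennreal (indicator (Hdom m n) w * (cmod (mono a w) * cmod (mono a w))) \<partial>lborel)"
    unfolding mono_norm2_def set_lebesgue_integral_def
    by (subst integral_eq_nn_integral) (auto simp: power2_eq_square)
  also have "\<dots> = 4 * pi\<^sup>2 * m / ((2 * fst a + 2) * (2 * wdeg m n a))"
    using assms by (simp add: nn_integral_Hdom_norm_mono_mult mem_A2_iff)
  also have "real_of_int ((2 * fst a + 2) * (2 * wdeg m n a)) = 4 * of_int ((fst a + 1) * wdeg m n a)"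
    by (simp add: algebra_simps)
  finally show ?thesis
    by simp
qed

lemma mono_norm2_pos: "m > 0 \<Longrightarrow> n > 0 \<Longrightarrow> a \<in> A2 m n \<Longrightarrow> mono_norm2 m n a > 0"
  by (simp add: mono_norm2_eq mem_A2_iff)

lemma integral_Hdom_mono_orthogonal:
  assumes "a \<noteq> (b1, - b2)"
  shows "(\<integral>w. indicator (Hdom m n) w * (cnj (mono a w) * (fst w powi b1 * cnj (snd w) powi b2)) \<partial>lborel) = 0"
proof -
  define h where "h w = indicator (Hdom m n) w * (cnj (mono a w) * (fst w powi b1 * cnj (snd w) powi b2))"
    for w
  have [measurable]: "h \<in> borel_measurable borel"
    unfolding h_def by measurable
  have factor: "h (c1 * fst w, c2 * snd w)
      = cnj (c1 powi fst a * c2 powi snd a) * c1 powi b1 * cnj c2 powi b2 * h w"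
    if "cmod c1 = 1" "cmod c2 = 1" for c1 c2 w
  proof -
    have "indicator (Hdom m n) (c1 * fst w, c2 * snd w) = (indicator (Hdom m n) w :: complex)"
      using that by (simp add: indicator_def Hdom_mult_unimodular)
    then show ?thesis
      by (simp add: h_def mono_def power_int_mult_distrib mult_ac)
  qed
  have "(\<integral>w. h w \<partial>lborel) = 0"
  proof (cases "fst a = b1")
    case False
    define c where "c = cis (pi / of_int (b1 - fst a))"
    have "cnj (c powi fst a) * c powi b1 = c powi (b1 - fst a)"
      by (simp add: c_def cis_power_int cis_cnj cis_mult algebra_simps diff_divide_distrib add_divide_distrib)
    also have "\<dots> = -1"
      using False cis_pi_div_power_int[of "b1 - fst a"] by (simp add: c_def)
    finally show ?thesis
      using factor[of c 1]
      by (intro integral_lborel_eq_0_if_rotation_factor[of c 1 h "-1"]) (simp_all add: c_def)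
  next
    case True
    with assms have "snd a + b2 \<noteq> 0"
      by (cases a) auto
    define c where "c = cis (pi / of_int (snd a + b2))"
    have "cnj (c powi snd a) * cnj c powi b2 = cnj (c powi (snd a + b2))"
      by (simp add: c_def cis_power_int cis_cnj cis_mult algebra_simps diff_divide_distrib add_divide_distrib)
    also have "\<dots> = -1"
      using \<open>snd a + b2 \<noteq> 0\<close> cis_pi_div_power_int[of "snd a + b2"] by (simp add: c_def)
    finally show ?thesis
      using factor[of 1 c]
      by (intro integral_lborel_eq_0_if_rotation_factor[of 1 c h "-1"]) (simp_all add: c_def True)
  qed
  then show ?thesis
    by (simp add: h_def)
qed


section \<open>Convergence of the kernel expansion\<close>

lemma norm_mono_div_mono_norm2_le:
  assumes "m > 0" "n > 0" "a \<in> A2 m n" "z \<in> Hdom m n"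
  defines "k \<equiv> nat (fst a)" and "J \<equiv> nat (wdeg m n a)"
    and "X \<equiv> cmod (fst z) * cmod (snd z) powr (- (real n / real m))"
    and "Y \<equiv> cmod (snd z) powr (1 / real m)"
  shows "cmod (mono a z) / mono_norm2 m n a * (pi\<^sup>2 * m)
    \<le> cmod (snd z) powr (- (real m + real n) / real m) * (real (Suc k) * X ^ k) * (real (Suc J) * Y ^ J)"
proof -
  define s where "s = cmod (snd z)"
  have "s > 0"
    using assms(1,2,4) by (auto simp: s_def mem_Hdom_iff)
  have a: "0 \<le> fst a" "1 \<le> wdeg m n a"
    using assms(3) by (simp_all add: mem_A2_iff)
  have "real J = real n * real k + real m * of_int (snd a) + real m + real n"
    using a by (simp add: J_def k_def wdeg_def)
  \<comment> \<open>Expressing \<open>snd a\<close> through \<open>k\<close> and \<open>J\<close> splits the bound into two power series.\<close>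
  then have "of_int (snd a) = - (real m + real n) / real m + real k * - (real n / real m) + real J * (1 / real m)"
    using \<open>m > 0\<close> by (simp add: field_simps)
  then have "s powr of_int (snd a)
      = s powr (- (real m + real n) / real m) * (s powr (- (real n / real m))) ^ k * (s powr (1 / real m)) ^ J"
    using \<open>s > 0\<close> by (simp only: powr_add powr_power)
  then have norm_eq: "cmod (mono a z) = s powr (- (real m + real n) / real m) * X ^ k * Y ^ J"
    using \<open>s > 0\<close> a by (simp add: norm_mono s_def k_def X_def Y_def power_mult_distrib)
  have "mono_norm2 m n a = pi\<^sup>2 * m / (real (Suc k) * real J)"
    using assms(1-3) a by (simp add: mono_norm2_eq k_def J_def)
  then have "cmod (mono a z) / mono_norm2 m n a * (pi\<^sup>2 * m) = cmod (mono a z) * real (Suc k) * real J"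
    using \<open>m > 0\<close> by simp
  also have "\<dots> \<le> cmod (mono a z) * real (Suc k) * real (Suc J)"
    by (intro mult_left_mono) auto
  finally show ?thesis
    by (simp add: norm_eq s_def mult_ac)
qed

lemma inj_on_fst_wdeg: "m > 0 \<Longrightarrow> inj_on (\<lambda>a. (nat (fst a), nat (wdeg m n a))) (A2 m n)"
  by (rule inj_onI) (auto simp: mem_A2_iff wdeg_def prod_eq_iff eq_nat_nat_iff)

lemma nn_integral_norm_mono_div_mono_norm2_finite:
  assumes "m > 0" "n > 0" "G \<subseteq> A2 m n" "z \<in> Hdom m n"
  shows "(\<integral>\<^sup>+a. ennreal (cmod (mono a z) / mono_norm2 m n a * (pi\<^sup>2 * m)) \<partial>count_space G) < \<infinity>"
proof -
  define s where "s = cmod (snd z)"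
  define X where "X = cmod (fst z) * s powr (- (real n / real m))"
  define Y where "Y = s powr (1 / real m)"
  have s: "0 < s" "s < 1" and z1: "cmod (fst z) < s powr (real n / real m)"
    using assms(1,2,4) by (auto simp: s_def mem_Hdom_iff)
  have "X < s powr (real n / real m) * s powr (- (real n / real m))"
    unfolding X_def using s z1 by (intro mult_strict_right_mono) auto
  then have X: "0 \<le> X" "X < 1"
    using s by (simp_all add: X_def powr_add[symmetric])
  have Y: "0 \<le> Y" "Y < 1"
    using s \<open>m > 0\<close> powr_less_mono2[of "1 / real m" s 1] by (simp_all add: Y_def)
  define A where "A k = s powr (- (real m + real n) / real m) * (real (Suc k) * X ^ k)" for k
  define B where "B j = real (Suc j) * Y ^ j" for j
  have "cmod (mono a z) / mono_norm2 m n a * (pi\<^sup>2 * m) \<le> A (nat (fst a)) * B (nat (wdeg m n a))"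
    if "a \<in> G" for a
    using norm_mono_div_mono_norm2_le[OF assms(1,2) _ assms(4), of a] that assms(3)
    by (auto simp: A_def B_def s_def X_def Y_def mult.assoc)
  moreover have "inj_on (\<lambda>a. (nat (fst a), nat (wdeg m n a))) G"
    using inj_on_fst_wdeg[OF \<open>m > 0\<close>] assms(3) by (rule inj_on_subset)
  moreover have "summable A"
    unfolding A_def using X by (intro summable_mult summable_Suc_mult_power)
  moreover have "summable B"
    unfolding B_def using Y by (rule summable_Suc_mult_power)
  ultimately show ?thesis
    using X Y by (intro nn_integral_count_space_finite_if_product_bound[where A = A and B = B])
      (auto simp: A_def B_def)
qed

lemma integrable_kernel_summands:
  assumes "m > 0" "n > 0" "G \<subseteq> A2 m n" "(b1, b2) \<in> A2 m n" "z \<in> Hdom m n"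
  shows "integrable (count_space G \<Otimes>\<^sub>M lborel) (\<lambda>(a, w). mono a z / mono_norm2 m n a
    * (indicator (Hdom m n) w * (cnj (mono a w) * (fst w powi b1 * cnj (snd w) powi b2))))"
    (is "integrable _ (\<lambda>(a, w). ?F a w)")
proof -
  have "countable G" by simp
  have F_measurable: "(\<lambda>(a, w). ?F a w) \<in> borel_measurable (count_space G \<Otimes>\<^sub>M lborel)"
    by (rule measurable_pair_measure_countable1[OF \<open>countable G\<close>]) simp
  have "(\<integral>\<^sup>+w. ennreal (norm (?F a w)) \<partial>lborel)
      \<le> ennreal (cmod (mono a z) / mono_norm2 m n a * (pi\<^sup>2 * m))" if "a \<in> G" for a
  proof -
    have a: "a \<in> A2 m n"
      using that assms(3) by auto
    have coeff_nonneg: "0 \<le> cmod (mono a z) / mono_norm2 m n a"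
      using mono_norm2_pos[OF assms(1,2) a] by simp
    have norm_F: "norm (?F a w) = cmod (mono a z) / mono_norm2 m n a
        * (indicator (Hdom m n) w * (cmod (mono a w) * cmod (mono (b1, b2) w)))" for w
      using mono_norm2_pos[OF assms(1,2) a]
      by (simp add: norm_mult norm_divide norm_power_int mono_def indicator_def)
    have "(\<integral>\<^sup>+w. ennreal (norm (?F a w)) \<partial>lborel)
        = (\<integral>\<^sup>+w. ennreal (cmod (mono a z) / mono_norm2 m n a)
          * ennreal (indicator (Hdom m n) w * (cmod (mono a w) * cmod (mono (b1, b2) w))) \<partial>lborel)"
      unfolding norm_F using coeff_nonneg by (intro nn_integral_cong ennreal_mult) auto
    also have "\<dots> = ennreal (cmod (mono a z) / mono_norm2 m n a)
          * (\<integral>\<^sup>+w. ennreal (indicator (Hdom m n) w * (cmod (mono a w) * cmod (mono (b1, b2) w))) \<partial>lborel)"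
      by (rule nn_integral_cmult) measurable
    also have "\<dots> \<le> ennreal (cmod (mono a z) / mono_norm2 m n a) * ennreal (pi\<^sup>2 * m)"
      using nn_integral_Hdom_norm_mono_mult_le[OF assms(1,2) a assms(4)] by (rule mult_left_mono) simp
    also have "\<dots> = ennreal (cmod (mono a z) / mono_norm2 m n a * (pi\<^sup>2 * m))"
      using coeff_nonneg by (rule ennreal_mult[symmetric]) simp
    finally show ?thesis .
  qed
  note summand_bound = this
  have "(\<integral>\<^sup>+p. ennreal (norm (case p of (a, w) \<Rightarrow> ?F a w)) \<partial>(count_space G \<Otimes>\<^sub>M lborel))
      = (\<integral>\<^sup>+a. \<integral>\<^sup>+w. ennreal (norm (?F a w)) \<partial>lborel \<partial>count_space G)"
    using lborel.nn_integral_fst[of "\<lambda>p. ennreal (norm (case p of (a, w) \<Rightarrow> ?F a w))"] F_measurable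
    by simp
  also have "\<dots> \<le> (\<integral>\<^sup>+a. ennreal (cmod (mono a z) / mono_norm2 m n a * (pi\<^sup>2 * m)) \<partial>count_space G)"
    using summand_bound by (intro nn_integral_mono) simp
  also have "\<dots> < \<infinity>"
    by (rule nn_integral_norm_mono_div_mono_norm2_finite[OF assms(1-3,5)])
  finally show ?thesis
    using F_measurable by (simp add: integrable_iff_bounded)
qed

lemma Kop_eq_infsum:
  assumes "integrable (count_space (Gset m n l) \<Otimes>\<^sub>M lborel)
    (\<lambda>(a, w). mono a z / mono_norm2 m n a * (indicator (Hdom m n) w * (cnj (mono a w) * f w)))"
  shows "Kop m n l f z = (\<Sum>\<^sub>\<infinity>a\<in>Gset m n l.
    mono a z / mono_norm2 m n a * (\<integral>w. indicator (Hdom m n) w * (cnj (mono a w) * f w) \<partial>lborel))"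
proof -
  define G where "G = Gset m n l"
  interpret P: pair_sigma_finite "count_space G" lborel
    by (intro pair_sigma_finite.intro sigma_finite_measure_count_space_countable
              lborel.sigma_finite_measure_axioms) (simp add: G_def)
  have "indicator (Hdom m n) w *\<^sub>R (Kker m n l z w * f w)
      = (\<integral>a. mono a z / mono_norm2 m n a * (indicator (Hdom m n) w * (cnj (mono a w) * f w)) \<partial>count_space G)"
    for w
  proof -
    have "indicator (Hdom m n) w *\<^sub>R (Kker m n l z w * f w)
        = (\<integral>a. mono a z * cnj (mono a w) / mono_norm2 m n a \<partial>count_space G) * (indicator (Hdom m n) w * f w)"
      by (simp add: Kker_def infsum_eq_integral_count_space G_def scaleR_conv_of_real indicator_def)
    also have "\<dots> = (\<integral>a. mono a z * cnj (mono a w) / mono_norm2 m n a * (indicator (Hdom m n) w * f w)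
        \<partial>count_space G)"
      by (rule integral_mult_left_zero[symmetric])
    finally show ?thesis
      by (simp add: mult_ac)
  qed
  then have "Kop m n l f z
      = (\<integral>w. \<integral>a. mono a z / mono_norm2 m n a * (indicator (Hdom m n) w * (cnj (mono a w) * f w))
          \<partial>count_space G \<partial>lborel)"
    by (simp add: Kop_def set_lebesgue_integral_def)
  also have "\<dots> = (\<integral>a. \<integral>w. mono a z / mono_norm2 m n a * (indicator (Hdom m n) w * (cnj (mono a w) * f w))
      \<partial>lborel \<partial>count_space G)"
    using assms by (intro P.Fubini_integral) (simp add: G_def)
  finally show ?thesis
    by (simp add: infsum_eq_integral_count_space G_def)
qed


theorem proposition4p2:
  fixes m n j :: nat and b1 b2 :: int
  assumes "m > 0" "n > 0" "coprime m n" "j < m"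
    and "(b1, b2) \<in> Gset m n j" "(b1, - b2) \<in> Gset m n j"
  shows "\<exists>C :: complex. \<forall>l < m. \<forall>z \<in> Hdom m n.
           Kop m n l (\<lambda>w. fst w powi b1 * cnj (snd w) powi b2) z =
           (if l = j then C * (fst z powi b1 * snd z powi (- b2)) else 0)"
proof -
  define I where "I a = (\<integral>w. indicator (Hdom m n) w
    * (cnj (mono a w) * (fst w powi b1 * cnj (snd w) powi b2)) \<partial>lborel)" for a
  define C where "C = I (b1, - b2) / mono_norm2 m n (b1, - b2)"
  have b: "(b1, b2) \<in> A2 m n"
    using assms(5) by (simp add: Gset_def)
  have G: "(b1, - b2) \<in> Gset m n l \<longleftrightarrow> l = j" if "l < m" for l
    using assms(4,6) that by (auto simp: Gset_def)
  have "Kop m n l (\<lambda>w. fst w powi b1 * cnj (snd w) powi b2) z =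
           (if l = j then C * (fst z powi b1 * snd z powi (- b2)) else 0)"
    if "l < m" "z \<in> Hdom m n" for l z
  proof -
    have "Kop m n l (\<lambda>w. fst w powi b1 * cnj (snd w) powi b2) z
        = (\<Sum>\<^sub>\<infinity>a\<in>Gset m n l. mono a z / mono_norm2 m n a * I a)"
      unfolding I_def using assms(1,2) b that(2)
      by (intro Kop_eq_infsum integrable_kernel_summands) (auto simp: Gset_def)
    also have "\<dots> = (if (b1, - b2) \<in> Gset m n l
        then mono (b1, - b2) z / mono_norm2 m n (b1, - b2) * I (b1, - b2) else 0)"
      by (rule infsum_eq_single) (simp add: I_def integral_Hdom_mono_orthogonal)
    finally show ?thesis
      using G[OF that(1)] by (simp add: C_def mono_def)
  qed
  then show ?thesis
    by blast
qed

end
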